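(* Let $\Omega\subset\mathbb{R}^d$ ($d=1,2$) be a rectangular domain with periodic boundary conditions, $\varepsilon>0$, $\tau>0$, and $(f,g)=\int_\Omega f\bar g\,d{\bf x}$. Let $b_i,a_{ij}$ ($i,j=1,\dots,s$) be real numbers with $b_ia_{ij}+b_ja_{ji}=b_ib_j$ for all $i,j$. Consider the semi-discrete $s$-stage Runge–Kutta scheme: for $i=1,\dots,s$, \[ \begin{aligned} &E_{ni}=E^n+\tau\sum_{j} a_{ij}k_j^1,\quad k_i^1={\rm i}\big(\Delta E_{ni}-\varepsilon^2\Delta^2E_{ni}-N_{ni}E_{ni}\big),\\ &N_{ni}=N^n+\tau\sum_{j} a_{ij}k_j^2,\quad k_i^2=\Delta v_{ni},\\ &v_{ni}=v^n+\tau\sum_{j} a_{ij}k_j^3,\quad k_i^3=N_{ni}-\varepsilon^2\Delta N_{ni}+Q_{ni},\\ &Q_{ni}=q^n+\tau\sum_{j} a_{ij}k_j^4,\quad k_i^4=2\,{\rm Re}\big(\bar E_{ni}\,k_i^1\big), \end{aligned} \] with update $E^{n+1}=E^n+\tau\sum_i b_ik_i^1$, $N^{n+1}=N^n+\tau\sum_i b_ik_i^2$, $v^{n+1}=v^n+\tau\sum_i b_ik_i^3$, $q^{n+1}=q^n+\tau\sum_i b_ik_i^4$, and consistent initial data $E^0=E_0$, $N^0=N_0$, $q^0=|E_0|^2$, $\Delta v^0=N_1$, $\int_\Omega v^0\,d{\bf x}=0$ (with $\int_\Omega N_1\,d{\bf x}=0$). Assume the stage equations are solvable at every step. Then $\mathcal{H}^n=\mathcal{H}^0$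 for all $n=1,2,\dots,J$, where \[ \mathcal{H}^n=(\Delta E^n,E^n)-\varepsilon^2(\Delta E^n,\Delta E^n)-\tfrac12(N^n,N^n)+\tfrac{\varepsilon^2}{2}(\Delta N^n,N^n)-(N^n,|E^n|^2)+\tfrac12(\Delta v^n,v^n). \]
   Context: $\mathcal{H}^n$ is the semi-discrete version of the original Hamiltonian energy of the quantum Zakharov system ${\rm i}E_t+\Delta E-\varepsilon^2\Delta^2E=NE$, $N_{tt}-\Delta N+\varepsilon^2\Delta^2N=\Delta|E|^2$ (with $\Delta v=N_t$). $J$ is the number of time steps, $\tau=T/J$. *)

theory Defs
  imports "HOL-Analysis.Analysis"
begin

text \<open>Functions on R^d are modelled as maps real^'d \<Rightarrow> 'b; the periodic rectangle
  Omega = [0,L_1] x ... x [0,L_d] is cbox 0 L.\<close>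

definition partial :: "'d::finite \<Rightarrow> (real^'d \<Rightarrow> 'b::real_normed_vector) \<Rightarrow> real^'d \<Rightarrow> 'b" where
  "partial i f x = vector_derivative (\<lambda>t. f (x + t *\<^sub>R axis i 1)) (at 0)"

fun iter_partial :: "'d::finite list \<Rightarrow> (real^'d \<Rightarrow> 'b::real_normed_vector) \<Rightarrow> real^'d \<Rightarrow> 'b" where
  "iter_partial [] f = f"
| "iter_partial (i # is) f = partial i (iter_partial is f)"

definition smooth_fun :: "(real^'d::finite \<Rightarrow> 'b::real_normed_vector) \<Rightarrow> bool" where
  "smooth_fun f \<longleftrightarrow> (\<forall>is. continuous_on UNIV (iter_partial is f) \<and>
      (\<forall>i x. (\<lambda>t. iter_partial is f (x + t *\<^sub>R axis i 1)) differentiable (at 0)))"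

definition periodic_fun :: "real^'d::finite \<Rightarrow> (real^'d \<Rightarrow> 'b) \<Rightarrow> bool" where
  "periodic_fun L f \<longleftrightarrow> (\<forall>i x. f (x + L$i *\<^sub>R axis i 1) = f x)"

definition lap :: "(real^'d::finite \<Rightarrow> 'b::real_normed_vector) \<Rightarrow> real^'d \<Rightarrow> 'b" where
  "lap f = (\<lambda>x. \<Sum>i\<in>UNIV. partial i (partial i f) x)"

definition ip :: "real^'d::finite \<Rightarrow> (real^'d \<Rightarrow> complex) \<Rightarrow> (real^'d \<Rightarrow> complex) \<Rightarrow> complex" where
  "ip L f g = integral (cbox 0 L) (\<lambda>x. f x * cnj (g x))"

definition cx :: "(real^'d::finite \<Rightarrow> real) \<Rightarrow> real^'d \<Rightarrow> complex" where
  "cx f = (\<lambda>x. complex_of_real (f x))"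

definition energy :: "real^'d::finite \<Rightarrow> real \<Rightarrow> (real^'d \<Rightarrow> complex) \<Rightarrow> (real^'d \<Rightarrow> real)
     \<Rightarrow> (real^'d \<Rightarrow> real) \<Rightarrow> complex" where
  "energy L \<epsilon> E N v =
     ip L (lap E) E - of_real (\<epsilon>^2) * ip L (lap E) (lap E)
     - 1/2 * ip L (cx N) (cx N) + of_real (\<epsilon>^2) / 2 * ip L (cx (lap N)) (cx N)
     - ip L (cx N) (cx (\<lambda>x. (cmod (E x))^2)) + 1/2 * ip L (cx (lap v)) (cx v)"

end

(*
  The scheme is an s-stage Runge-Kutta method for the extended system E_t = k1, N_t = lap v,
  v_t = k3, q_t = k4 in the unknowns Y = (E, N, v, q), where q stands in for |E|^2. With q in
  place of |E|^2 the Hamiltonian becomes a quadratic form S(Y, Y), and integration by parts over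
  the periodic box shows S(Y, F Y) + S(F Y, Y) = 0 for the right-hand side F of the system.
  Runge-Kutta methods with b_i a_ij + b_j a_ji = b_i b_j preserve every such quadratic invariant
  (Cooper's theorem), so S(Y^n, Y^n) is constant. The same argument, applied pointwise to
  q - |E|^2, gives q^n = |E^n|^2 for all n, and then S(Y^n, Y^n) is exactly the energy H^n.
*)

theory Submission
  imports Defs
begin

section \<open>Symplectic Runge-Kutta methods and quadratic invariants\<close>

lemma symplectic_double_sum:
  fixes m :: "nat \<Rightarrow> nat \<Rightarrow> 'a::real_vector"
  assumes symplectic: "\<forall>i\<in>{1..s}. \<forall>j\<in>{1..s}. b i * a i j + b j * a j i = b i * b j"
  shows "(\<Sum>i=1..s. \<Sum>j=1..s. (b i * a i j) *\<^sub>R (m j i + m i j)) = (\<Sum>i=1..s. \<Sum>j=1..s. (b i * b j) *\<^sub>R m i j)"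
proof -
  have "(\<Sum>i=1..s. \<Sum>j=1..s. (b i * a i j) *\<^sub>R (m j i + m i j))
      = (\<Sum>i=1..s. \<Sum>j=1..s. (b i * a i j) *\<^sub>R m j i) + (\<Sum>i=1..s. \<Sum>j=1..s. (b i * a i j) *\<^sub>R m i j)"
    by (simp add: scaleR_add_right sum.distrib)
  also have "(\<Sum>i=1..s. \<Sum>j=1..s. (b i * a i j) *\<^sub>R m j i) = (\<Sum>i=1..s. \<Sum>j=1..s. (b j * a j i) *\<^sub>R m i j)"
    by (rule sum.swap)
  also have "(\<Sum>i=1..s. \<Sum>j=1..s. (b j * a j i) *\<^sub>R m i j) + (\<Sum>i=1..s. \<Sum>j=1..s. (b i * a i j) *\<^sub>R m i j)
      = (\<Sum>i=1..s. \<Sum>j=1..s. (b i * a i j + b j * a j i) *\<^sub>R m i j)"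
    by (simp add: scaleR_add_left sum.distrib add.commute)
  also have "\<dots> = (\<Sum>i=1..s. \<Sum>j=1..s. (b i * b j) *\<^sub>R m i j)"
    using symplectic by (intro sum.cong refl) auto
  finally show ?thesis .
qed

text \<open>Cooper's theorem, for a form \<open>S\<close> that need only be bilinear along the combinations
  \<open>comb c = Y + \<tau> \<Sum>\<^sub>j c\<^sub>j K\<^sub>j\<close> and on arguments in \<open>V\<close>. A nonzero \<open>d\<close> accounts
  for an invariant with a linear part, such as \<open>q - |E|\<^sup>2\<close>.\<close>

lemma symplectic_rk_quadratic:
  fixes S :: "'v \<Rightarrow> 'v \<Rightarrow> 'a::real_vector" and comb :: "(nat \<Rightarrow> real) \<Rightarrow> 'v"
  assumes symplectic: "\<forall>i\<in>{1..s}. \<forall>j\<in>{1..s}. b i * a i j + b j * a j i = b i * b j"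
    and left: "\<And>c Z. Z \<in> V \<Longrightarrow> S (comb c) Z = S Y Z + \<tau> *\<^sub>R (\<Sum>j=1..s. c j *\<^sub>R S (K j) Z)"
    and right: "\<And>c Z. Z \<in> V \<Longrightarrow> S Z (comb c) = S Z Y + \<tau> *\<^sub>R (\<Sum>j=1..s. c j *\<^sub>R S Z (K j))"
    and V: "Y \<in> V" "\<And>j. j \<in> {1..s} \<Longrightarrow> K j \<in> V" "comb b \<in> V"
    and stage: "\<And>i. i \<in> {1..s} \<Longrightarrow> S (comb (a i)) (K i) + S (K i) (comb (a i)) = d i"
  shows "S (comb b) (comb b) = S Y Y + \<tau> *\<^sub>R (\<Sum>i=1..s. b i *\<^sub>R d i)"
proof -
  define p where "p i = S Y (K i)" for i
  define r where "r i = S (K i) Y" for i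
  define m where "m i j = S (K i) (K j)" for i j
  have "S (comb b) (comb b) = S Y (comb b) + \<tau> *\<^sub>R (\<Sum>i=1..s. b i *\<^sub>R S (K i) (comb b))"
    using left V(3) .
  also have "\<dots> = S Y Y + \<tau> *\<^sub>R (\<Sum>i=1..s. b i *\<^sub>R (p i + r i))
      + \<tau>\<^sup>2 *\<^sub>R (\<Sum>i=1..s. \<Sum>j=1..s. (b i * b j) *\<^sub>R m i j)"
    using V by (simp add: right p_def r_def m_def power2_eq_square algebra_simps scaleR_sum_right sum.distrib)
  also have "(\<Sum>i=1..s. b i *\<^sub>R (p i + r i))
      = (\<Sum>i=1..s. b i *\<^sub>R d i) - \<tau> *\<^sub>R (\<Sum>i=1..s. \<Sum>j=1..s. (b i * a i j) *\<^sub>R (m j i + m i j))"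
  proof -
    have "p i + r i = d i - \<tau> *\<^sub>R (\<Sum>j=1..s. a i j *\<^sub>R (m j i + m i j))" if "i \<in> {1..s}" for i
      using stage[OF that, symmetric] V that
      by (simp add: left right p_def r_def m_def algebra_simps sum.distrib)
    then have "(\<Sum>i=1..s. b i *\<^sub>R (p i + r i))
        = (\<Sum>i=1..s. b i *\<^sub>R d i - \<tau> *\<^sub>R (\<Sum>j=1..s. (b i * a i j) *\<^sub>R (m j i + m i j)))"
      by (intro sum.cong refl) (simp add: scaleR_diff_right scaleR_sum_right mult.left_commute)
    then show ?thesis
      by (simp add: sum_subtractf scaleR_sum_right)
  qed
  finally show ?thesis
    unfolding symplectic_double_sum[OF symplectic] by (simp add: power2_eq_square algebra_simps)
qed

section \<open>Partial derivatives and smooth functions\<close>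

definition partial_differentiable :: "'d::finite \<Rightarrow> (real^'d \<Rightarrow> 'b::real_normed_vector) \<Rightarrow> bool" where
  "partial_differentiable i f \<longleftrightarrow> (\<forall>x. (\<lambda>t. f (x + t *\<^sub>R axis i 1)) differentiable (at 0))"

lemma partial_differentiableD:
  assumes "partial_differentiable i f"
  shows "((\<lambda>t. f (x + t *\<^sub>R axis i 1)) has_vector_derivative partial i f x) (at 0)"
  using assms vector_derivative_works unfolding partial_differentiable_def partial_def by blast

lemma partial_differentiable_line_derivative:
  assumes "partial_differentiable i f"
  shows "((\<lambda>t. f (x + t *\<^sub>R axis i 1)) has_vector_derivative partial i f (x + t0 *\<^sub>R axis i 1)) (at t0)"
proof -
  let ?y = "x + t0 *\<^sub>R axis i 1"
  have "((\<lambda>t. f (?y + t *\<^sub>R axis i 1)) has_vector_derivative partial i f ?y) (at (t0 - t0))"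
    using partial_differentiableD[OF assms] by simp
  moreover have "((\<lambda>t. t - t0) has_vector_derivative 1) (at t0)"
    by (auto intro!: derivative_eq_intros)
  ultimately have "((\<lambda>t. f (?y + (t - t0) *\<^sub>R axis i 1)) has_vector_derivative partial i f ?y) (at t0)"
    using vector_diff_chain_at[of "\<lambda>t. t - t0" 1 t0] by (simp add: o_def)
  then show ?thesis
    by (simp add: algebra_simps)
qed

lemma partial_eqI:
  assumes "\<And>x. ((\<lambda>t. f (x + t *\<^sub>R axis i 1)) has_vector_derivative D x) (at 0)"
  shows "partial i f = D" "partial_differentiable i f"
  using assms unfolding partial_def partial_differentiable_def fun_eq_iff
  by (auto intro: vector_derivative_at differentiableI_vector)

lemma partial_add:
  assumes "partial_differentiable i f" "partial_differentiable i g"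
  shows "partial i (\<lambda>x. f x + g x) = (\<lambda>x. partial i f x + partial i g x)"
    and "partial_differentiable i (\<lambda>x. f x + g x)"
  by (rule partial_eqI, rule has_vector_derivative_add,
      rule partial_differentiableD[OF assms(1)], rule partial_differentiableD[OF assms(2)])+

lemma partial_bounded_linear:
  assumes "bounded_linear h" "partial_differentiable i f"
  shows "partial i (\<lambda>x. h (f x)) = (\<lambda>x. h (partial i f x))"
    and "partial_differentiable i (\<lambda>x. h (f x))"
  by (rule partial_eqI, rule bounded_linear.has_vector_derivative[OF assms(1)],
      rule partial_differentiableD[OF assms(2)])+

lemma partial_mult:
  fixes f g :: "real^'d::finite \<Rightarrow> 'b::real_normed_algebra"
  assumes "partial_differentiable i f" "partial_differentiable i g"
  shows "partial i (\<lambda>x. f x * g x) = (\<lambda>x. f x * partial i g x + partial i f x * g x)"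
    and "partial_differentiable i (\<lambda>x. f x * g x)"
  using has_vector_derivative_mult[OF partial_differentiableD[OF assms(1)] partial_differentiableD[OF assms(2)]]
  by (auto intro!: partial_eqI)

lemma partial_const: "partial i (\<lambda>x. c) = (\<lambda>x. 0)"
  by (rule partial_eqI) (rule has_vector_derivative_const)

lemma periodic_partial:
  assumes "periodic_fun L f"
  shows "periodic_fun L (partial i f)"
proof -
  have "(\<lambda>t. f (x + L$j *\<^sub>R axis j 1 + t *\<^sub>R axis i 1)) = (\<lambda>t. f (x + t *\<^sub>R axis i 1))" for x j
    using assms unfolding periodic_fun_def by (metis add.assoc add.commute)
  then show ?thesis
    unfolding periodic_fun_def partial_def by simp
qed

lemma smooth_fun_iff:
  "smooth_fun f \<longleftrightarrow>
     (\<forall>is. continuous_on UNIV (iter_partial is f) \<and> (\<forall>i. partial_differentiable i (iter_partial is f)))"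
  unfolding smooth_fun_def partial_differentiable_def by auto

lemma smooth_imp_continuous: "smooth_fun f \<Longrightarrow> continuous_on UNIV f"
  unfolding smooth_fun_iff by (metis iter_partial.simps(1))

lemma smooth_imp_partial_differentiable: "smooth_fun f \<Longrightarrow> partial_differentiable i f"
  unfolding smooth_fun_iff by (metis iter_partial.simps(1))

lemma smooth_imp_integrable:
  fixes f :: "real^'d::finite \<Rightarrow> 'b::banach"
  shows "smooth_fun f \<Longrightarrow> f integrable_on cbox a b"
  by (meson smooth_imp_continuous continuous_on_subset integrable_continuous subset_UNIV)

lemma iter_partial_append: "iter_partial is (partial i f) = iter_partial (is @ [i]) f"
  by (induction "is") auto

lemma smooth_partial: "smooth_fun f \<Longrightarrow> smooth_fun (partial i f)"
  by (simp add: smooth_fun_iff iter_partial_append)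

lemma smooth_add: "smooth_fun f \<Longrightarrow> smooth_fun g \<Longrightarrow> smooth_fun (\<lambda>x. f x + g x)"
proof -
  assume "smooth_fun f" "smooth_fun g"
  then have "iter_partial is (\<lambda>x. f x + g x) = (\<lambda>x. iter_partial is f x + iter_partial is g x)" for "is"
    by (induction "is") (auto simp: smooth_fun_iff partial_add)
  with \<open>smooth_fun f\<close> \<open>smooth_fun g\<close> show ?thesis
    by (auto simp: smooth_fun_iff intro: continuous_on_add partial_add(2))
qed

lemma smooth_bounded_linear: "bounded_linear h \<Longrightarrow> smooth_fun f \<Longrightarrow> smooth_fun (\<lambda>x. h (f x))"
proof -
  assume "bounded_linear h" "smooth_fun f"
  then have "iter_partial is (\<lambda>x. h (f x)) = (\<lambda>x. h (iter_partial is f x))" for "is"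
    by (induction "is") (auto simp: smooth_fun_iff partial_bounded_linear)
  with \<open>bounded_linear h\<close> \<open>smooth_fun f\<close> show ?thesis
    by (auto simp: smooth_fun_iff intro: bounded_linear.continuous_on partial_bounded_linear(2))
qed

lemma smooth_diff: "smooth_fun f \<Longrightarrow> smooth_fun g \<Longrightarrow> smooth_fun (\<lambda>x. f x - g x)"
  using smooth_add[OF _ smooth_bounded_linear[OF bounded_linear_minus[OF bounded_linear_ident]], of f g]
  by simp

lemma smooth_zero: "smooth_fun (\<lambda>x. 0)"
proof -
  have zero: "iter_partial is (\<lambda>x. 0) = (\<lambda>x. 0)" for "is"
    by (induction "is") (auto simp: partial_const)
  show ?thesis
    unfolding smooth_fun_def zero by simp
qed

lemma smooth_sum:
  "finite A \<Longrightarrow> (\<And>j. j \<in> A \<Longrightarrow> smooth_fun (g j)) \<Longrightarrow> smooth_fun (\<lambda>x. \<Sum>j\<in>A. g j x)"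
  by (induction A rule: finite_induct) (auto intro: smooth_zero smooth_add)

text \<open>By the Leibniz rule, every iterated partial derivative of \<open>f * g\<close> is a finite sum of
  products of iterated partial derivatives of \<open>f\<close> and of \<open>g\<close>.\<close>

inductive leibniz_sum :: "(real^'d::finite \<Rightarrow> 'b) \<Rightarrow> (real^'d \<Rightarrow> 'b) \<Rightarrow> (real^'d \<Rightarrow> 'b::real_normed_algebra) \<Rightarrow> bool"
  for f g where
  leibniz_product: "leibniz_sum f g (\<lambda>x. iter_partial is f x * iter_partial js g x)"
| leibniz_add: "leibniz_sum f g h1 \<Longrightarrow> leibniz_sum f g h2 \<Longrightarrow> leibniz_sum f g (\<lambda>x. h1 x + h2 x)"

lemma leibniz_sum_partial:
  assumes "smooth_fun f" "smooth_fun g" "leibniz_sum f g h"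
  shows "continuous_on UNIV h \<and> (\<forall>i. partial_differentiable i h \<and> leibniz_sum f g (partial i h))"
  using assms(3)
proof induction
  case (leibniz_product "is" js)
  have "leibniz_sum f g (\<lambda>x. iter_partial is f x * iter_partial (i # js) g x
      + iter_partial (i # is) f x * iter_partial js g x)" for i
    by (intro leibniz_sum.intros)
  then show ?case
    using assms(1,2) by (auto simp: smooth_fun_iff partial_mult intro!: continuous_on_mult)
next
  case (leibniz_add h1 h2)
  then show ?case
    by (auto simp: partial_add intro!: continuous_on_add leibniz_sum.intros)
qed

lemma smooth_mult:
  fixes f g :: "real^'d::finite \<Rightarrow> 'b::real_normed_algebra"
  assumes "smooth_fun f" "smooth_fun g"
  shows "smooth_fun (\<lambda>x. f x * g x)"
proof -
  have "leibniz_sum f g (iter_partial is (\<lambda>x. f x * g x))" for "is"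
  proof (induction "is")
    case Nil
    show ?case using leibniz_product[of f g "[]" "[]"] by simp
  next
    case (Cons i "is")
    then show ?case using leibniz_sum_partial[OF assms] by simp
  qed
  then show ?thesis
    using leibniz_sum_partial[OF assms] by (simp add: smooth_fun_iff)
qed

lemma smooth_lap: "smooth_fun f \<Longrightarrow> smooth_fun (lap f)"
  unfolding lap_def by (intro smooth_sum smooth_partial) auto

lemma periodic_lap: "periodic_fun L f \<Longrightarrow> periodic_fun L (lap f)"
  using periodic_partial[of L "partial i f" i for i] periodic_partial[of L f]
  unfolding lap_def periodic_fun_def by simp

lemma lap_bounded_linear:
  assumes "bounded_linear h" "smooth_fun f"
  shows "lap (\<lambda>x. h (f x)) = (\<lambda>x. h (lap f x))"
proof -
  have "partial i (partial i (\<lambda>x. h (f x))) = (\<lambda>x. h (partial i (partial i f) x))" for i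
    using assms by (simp add: partial_bounded_linear smooth_imp_partial_differentiable smooth_partial)
  then show ?thesis
    unfolding lap_def using bounded_linear.linear[OF assms(1)] by (simp add: linear_sum)
qed

lemma smooth_cx: "smooth_fun f \<Longrightarrow> smooth_fun (cx f)"
  unfolding cx_def by (rule smooth_bounded_linear[OF bounded_linear_of_real])

lemma periodic_cx: "periodic_fun L f \<Longrightarrow> periodic_fun L (cx f)"
  by (simp add: periodic_fun_def cx_def)

lemma lap_cx: "smooth_fun f \<Longrightarrow> lap (cx f) = cx (lap f)"
  unfolding cx_def by (rule lap_bounded_linear[OF bounded_linear_of_real])

section \<open>Integration over the periodic box\<close>

lemma integral_periodic_translate:
  fixes h :: "real^'d::finite \<Rightarrow> 'b::banach"
  assumes cont: "continuous_on UNIV h" and per: "periodic_fun L h" and t: "0 \<le> t" "t \<le> L$i"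
  shows "integral (cbox 0 L) (\<lambda>x. h (x + t *\<^sub>R axis i 1)) = integral (cbox 0 L) h"
proof -
  let ?e = "axis i 1 :: real^'d"
  have int: "h integrable_on cbox a b" for a b
    by (meson cont continuous_on_subset integrable_continuous subset_UNIV)
  have translate: "integral (cbox (a - c) (b - c)) (\<lambda>x. h (x + c)) = integral (cbox a b) h" for a b c
    using has_integral_affinity'[OF integrable_integral[OF int], of 1 c] by (simp add: integral_unique)
  have split: "integral (cbox a b) h
      = integral (cbox a b \<inter> {x. x$i \<le> c}) h + integral (cbox a b \<inter> {x. c \<le> x$i}) h" for a b c
    using integral_split[OF int, of ?e a b c] by (simp add: inner_axis)
  have lower: "cbox (t *\<^sub>R ?e) (L + t *\<^sub>R ?e) \<inter> {x. x$i \<le> L$i} = cbox 0 L \<inter> {x. t \<le> x$i}"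
    using t unfolding set_eq_iff mem_box_cart Int_iff mem_Collect_eq by (simp add: axis_def) (smt (verit))
  have upper: "cbox (t *\<^sub>R ?e) (L + t *\<^sub>R ?e) \<inter> {x. L$i \<le> x$i} = cbox (L$i *\<^sub>R ?e) (L + t *\<^sub>R ?e)"
    using t unfolding set_eq_iff mem_box_cart Int_iff mem_Collect_eq by (simp add: axis_def) (smt (verit))
  have upper_shifted: "cbox (L$i *\<^sub>R ?e - L$i *\<^sub>R ?e) (L + t *\<^sub>R ?e - L$i *\<^sub>R ?e) = cbox 0 L \<inter> {x. x$i \<le> t}"
    using t unfolding set_eq_iff mem_box_cart Int_iff mem_Collect_eq by (simp add: axis_def) (smt (verit))
  (* cut the shifted box at x_i = L_i and move the upper slab back by one period *)
  have "integral (cbox 0 L) (\<lambda>x. h (x + t *\<^sub>R ?e))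
      = integral (cbox (t *\<^sub>R ?e - t *\<^sub>R ?e) (L + t *\<^sub>R ?e - t *\<^sub>R ?e)) (\<lambda>x. h (x + t *\<^sub>R ?e))"
    by simp
  also have "\<dots> = integral (cbox (t *\<^sub>R ?e) (L + t *\<^sub>R ?e)) h"
    by (rule translate)
  also have "\<dots> = integral (cbox 0 L \<inter> {x. t \<le> x$i}) h + integral (cbox (L$i *\<^sub>R ?e) (L + t *\<^sub>R ?e)) h"
    by (subst split[of _ _ "L$i"]) (simp only: lower upper)
  also have "integral (cbox (L$i *\<^sub>R ?e) (L + t *\<^sub>R ?e)) h
      = integral (cbox 0 L \<inter> {x. x$i \<le> t}) (\<lambda>x. h (x + L$i *\<^sub>R ?e))"
    by (simp only: translate[symmetric, of _ _ "L$i *\<^sub>R ?e"] upper_shifted)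
  also have "(\<lambda>x. h (x + L$i *\<^sub>R ?e)) = h"
    using per unfolding periodic_fun_def by simp
  also have "integral (cbox 0 L \<inter> {x. t \<le> x$i}) h + integral (cbox 0 L \<inter> {x. x$i \<le> t}) h
      = integral (cbox 0 L) h"
    using split[of 0 L t] by simp
  finally show ?thesis .
qed

text \<open>Translating in direction \<open>i\<close> does not change the integral over a period, so the
  derivative in \<open>t\<close> at \<open>0\<close>, which is the integral of \<open>partial i h\<close>, vanishes.\<close>

lemma integral_partial_periodic:
  fixes h :: "real^'d::finite \<Rightarrow> 'b::banach"
  assumes L: "0 < L$i" and per: "periodic_fun L h"
    and cont: "continuous_on UNIV h" "continuous_on UNIV (partial i h)"
    and diff: "partial_differentiable i h"
  shows "integral (cbox 0 L) (partial i h) = 0"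
proof -
  let ?e = "axis i 1 :: real^'d"
  define F where "F t = integral (cbox 0 L) (\<lambda>x. h (x + t *\<^sub>R ?e))" for t
  have "(F has_vector_derivative integral (cbox 0 L) (\<lambda>x. partial i h (x + 0 *\<^sub>R ?e))) (at 0 within {0..L$i})"
    unfolding F_def
  proof (rule leibniz_rule_vector_derivative[where fx = "\<lambda>t x. partial i h (x + t *\<^sub>R ?e)"])
    show "((\<lambda>t. h (x + t *\<^sub>R ?e)) has_vector_derivative partial i h (x + t *\<^sub>R ?e)) (at t within {0..L$i})"
      for t x
      using partial_differentiable_line_derivative[OF diff] by (rule has_vector_derivative_at_within)
    show "(\<lambda>x. h (x + t *\<^sub>R ?e)) integrable_on cbox 0 L" for t
      by (rule integrable_continuous, rule continuous_on_compose2[OF cont(1)]) (auto intro!: continuous_intros)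
    have "continuous_on UNIV (\<lambda>p::real \<times> (real^'d). partial i h (snd p + fst p *\<^sub>R ?e))"
      by (rule continuous_on_compose2[OF cont(2)]) (auto intro!: continuous_intros)
    then show "continuous_on ({0..L$i} \<times> cbox 0 L) (\<lambda>(t, x). partial i h (x + t *\<^sub>R ?e))"
      unfolding split_beta by (rule continuous_on_subset) auto
  qed (use L in auto)
  moreover have "(F has_vector_derivative 0) (at 0 within {0..L$i})"
  proof (rule has_vector_derivative_transform[where f = "\<lambda>t. F 0"])
    show "F t = F 0" if "t \<in> {0..L$i}" for t
      using that integral_periodic_translate[OF cont(1) per] by (simp add: F_def)
  qed (use L in simp_all)
  ultimately show ?thesis
    using vector_derivative_unique_within_closed_interval[of 0 "L$i" 0 F] L by simp
qed

lemma integral_partial_mult_periodic: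
  fixes f g :: "real^'d::finite \<Rightarrow> 'b::{real_normed_algebra, banach}"
  assumes L: "0 < L$i" and f: "smooth_fun f" "periodic_fun L f" and g: "smooth_fun g" "periodic_fun L g"
  shows "integral (cbox 0 L) (\<lambda>x. partial i f x * g x) = - integral (cbox 0 L) (\<lambda>x. f x * partial i g x)"
proof -
  let ?h = "\<lambda>x. f x * g x"
  have h: "smooth_fun ?h"
    by (rule smooth_mult[OF f(1) g(1)])
  have "integral (cbox 0 L) (partial i ?h) = 0"
  proof (rule integral_partial_periodic[OF L])
    show "periodic_fun L ?h"
      using f(2) g(2) by (simp add: periodic_fun_def)
  qed (use h in \<open>simp_all add: smooth_imp_continuous smooth_partial smooth_imp_partial_differentiable\<close>)
  moreover have "integral (cbox 0 L) (partial i ?h)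
      = integral (cbox 0 L) (\<lambda>x. f x * partial i g x) + integral (cbox 0 L) (\<lambda>x. partial i f x * g x)"
    unfolding partial_mult(1)[OF smooth_imp_partial_differentiable[OF f(1)] smooth_imp_partial_differentiable[OF g(1)]]
    by (intro integral_add smooth_imp_integrable smooth_mult smooth_partial f g)
  ultimately show ?thesis
    by (simp add: eq_neg_iff_add_eq_0 add.commute)
qed

lemma ip_has_integral:
  "continuous_on UNIV f \<Longrightarrow> continuous_on UNIV g \<Longrightarrow> ((\<lambda>x. f x * cnj (g x)) has_integral ip L f g) (cbox 0 L)"
  unfolding ip_def
  by (rule integrable_integral, rule integrable_continuous) (auto intro!: continuous_intros intro: continuous_on_subset)

lemma ip_cnj_has_integral:
  "continuous_on UNIV f \<Longrightarrow> continuous_on UNIV g \<Longrightarrow>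
    ((\<lambda>x. cnj (f x * cnj (g x))) has_integral cnj (ip L f g)) (cbox 0 L)"
  using has_integral_cnj[THEN iffD2, OF ip_has_integral] by (simp add: o_def)

lemma ip_commute: "ip L f g = cnj (ip L g f)"
  unfolding ip_def integral_cnj by (simp add: mult.commute)

lemma ip_cx_commute: "ip L (cx f) (cx g) = ip L (cx g) (cx f)"
  unfolding ip_def cx_def by (simp add: mult.commute)

lemma ip_lap_self_adjoint:
  fixes f g :: "real^'d::finite \<Rightarrow> complex"
  assumes L: "\<forall>j. 0 < L$j" and f: "smooth_fun f" "periodic_fun L f" and g: "smooth_fun g" "periodic_fun L g"
  shows "ip L (lap f) g = ip L f (lap g)"
proof -
  define G where "G = (\<lambda>x. cnj (g x))"
  have G: "smooth_fun G" "periodic_fun L G"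
    using smooth_bounded_linear[OF bounded_linear_cnj g(1)] g(2) by (simp_all add: G_def periodic_fun_def)
  have "partial i (partial i G) = (\<lambda>x. cnj (partial i (partial i g) x))" for i
    unfolding G_def using g(1)
    by (simp add: partial_bounded_linear[OF bounded_linear_cnj] smooth_imp_partial_differentiable smooth_partial)
  then have lap_G: "(\<Sum>i\<in>UNIV. partial i (partial i G) x) = cnj (lap g x)" for x
    by (simp add: lap_def cnj_sum)
  have ibp: "integral (cbox 0 L) (\<lambda>x. partial i (partial i f) x * G x)
      = integral (cbox 0 L) (\<lambda>x. f x * partial i (partial i G) x)" for i
    using integral_partial_mult_periodic[OF _ smooth_partial[OF f(1)] periodic_partial[OF f(2)] G, of i]
      integral_partial_mult_periodic[OF _ f smooth_partial[OF G(1)] periodic_partial[OF G(2)], of i] L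
    by simp
  have "ip L (lap f) g = (\<Sum>i\<in>UNIV. integral (cbox 0 L) (\<lambda>x. partial i (partial i f) x * G x))"
    unfolding ip_def lap_def G_def sum_distrib_right
    by (rule integral_sum) (auto intro!: smooth_imp_integrable smooth_mult smooth_partial f G[unfolded G_def])
  also have "\<dots> = (\<Sum>i\<in>UNIV. integral (cbox 0 L) (\<lambda>x. f x * partial i (partial i G) x))"
    by (simp only: ibp)
  also have "\<dots> = integral (cbox 0 L) (\<lambda>x. \<Sum>i\<in>UNIV. f x * partial i (partial i G) x)"
    by (rule integral_sum[symmetric]) (auto intro!: smooth_imp_integrable smooth_mult smooth_partial f G)
  also have "\<dots> = ip L f (lap g)"
    unfolding ip_def by (simp add: sum_distrib_left[symmetric] lap_G)
  finally show ?thesis .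
qed

definition rk_update :: "(real^'d::finite \<Rightarrow> 'b::real_normed_vector) \<Rightarrow> real \<Rightarrow> ('j \<Rightarrow> real)
    \<Rightarrow> ('j \<Rightarrow> real^'d \<Rightarrow> 'b) \<Rightarrow> 'j set \<Rightarrow> real^'d \<Rightarrow> 'b" where
  "rk_update f t c K A = (\<lambda>x. f x + t *\<^sub>R (\<Sum>j\<in>A. c j *\<^sub>R K j x))"

lemma rk_update_of_real:
  "(\<lambda>x. f x + of_real t * (\<Sum>j\<in>A. of_real (c j) * K j x)) = rk_update f t c K A"
  by (simp add: rk_update_def scaleR_conv_of_real)

lemma cx_rk_update:
  "cx (\<lambda>x. f x + t * (\<Sum>j\<in>A. c j * K j x)) = rk_update (cx f) t c (\<lambda>j. cx (K j)) A"
  by (simp add: rk_update_def cx_def scaleR_conv_of_real)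

lemma smooth_rk_update:
  "smooth_fun f \<Longrightarrow> finite A \<Longrightarrow> (\<And>j. j \<in> A \<Longrightarrow> smooth_fun (K j)) \<Longrightarrow> smooth_fun (rk_update f t c K A)"
  unfolding rk_update_def
  by (intro smooth_add smooth_bounded_linear[OF bounded_linear_scaleR_right] smooth_sum) auto

lemma partial_rk_update:
  assumes "partial_differentiable i f" "\<And>j. j \<in> A \<Longrightarrow> partial_differentiable i (K j)"
  shows "partial i (rk_update f t c K A) = rk_update (partial i f) t c (\<lambda>j. partial i (K j)) A"
    and "partial_differentiable i (rk_update f t c K A)"
proof -
  have "((\<lambda>s. rk_update f t c K A (x + s *\<^sub>R axis i 1)) has_vector_derivative
      rk_update (partial i f) t c (\<lambda>j. partial i (K j)) A x) (at 0)" for x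
    unfolding rk_update_def
    by (intro has_vector_derivative_add partial_differentiableD assms
        bounded_linear.has_vector_derivative[OF bounded_linear_scaleR_right] has_vector_derivative_sum)
  then show "partial i (rk_update f t c K A) = rk_update (partial i f) t c (\<lambda>j. partial i (K j)) A"
    and "partial_differentiable i (rk_update f t c K A)"
    by (rule partial_eqI)+
qed

lemma lap_rk_update:
  assumes "smooth_fun f" "\<And>j. j \<in> A \<Longrightarrow> smooth_fun (K j)"
  shows "lap (rk_update f t c K A) = rk_update (lap f) t c (\<lambda>j. lap (K j)) A"
proof -
  have "partial i (partial i (rk_update f t c K A))
      = rk_update (partial i (partial i f)) t c (\<lambda>j. partial i (partial i (K j))) A" for i
    using assms by (simp add: partial_rk_update smooth_imp_partial_differentiable smooth_partial)
  then show ?thesis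
    unfolding lap_def by (simp add: rk_update_def sum.distrib scaleR_sum_right sum.swap[of _ UNIV A])
qed

lemma ip_rk_update_left:
  assumes "continuous_on UNIV f" "continuous_on UNIV h" "\<And>j. j \<in> A \<Longrightarrow> continuous_on UNIV (K j)"
    and "finite A"
  shows "ip L (rk_update f t c K A) h = ip L f h + t *\<^sub>R (\<Sum>j\<in>A. c j *\<^sub>R ip L (K j) h)"
proof -
  have "((\<lambda>x. f x * cnj (h x) + t *\<^sub>R (\<Sum>j\<in>A. c j *\<^sub>R (K j x * cnj (h x)))) has_integral
      ip L f h + t *\<^sub>R (\<Sum>j\<in>A. c j *\<^sub>R ip L (K j) h)) (cbox 0 L)"
    using assms by (intro has_integral_add has_integral_cmul has_integral_sum ip_has_integral) auto
  then show ?thesis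
    unfolding ip_def rk_update_def
    by (simp add: distrib_right scaleR_sum_right sum_distrib_right integral_unique)
qed

lemma ip_rk_update_right:
  assumes "continuous_on UNIV f" "continuous_on UNIV h" "\<And>j. j \<in> A \<Longrightarrow> continuous_on UNIV (K j)"
    and "finite A"
  shows "ip L h (rk_update f t c K A) = ip L h f + t *\<^sub>R (\<Sum>j\<in>A. c j *\<^sub>R ip L h (K j))"
proof -
  have "((\<lambda>x. h x * cnj (f x) + t *\<^sub>R (\<Sum>j\<in>A. c j *\<^sub>R (h x * cnj (K j x)))) has_integral
      ip L h f + t *\<^sub>R (\<Sum>j\<in>A. c j *\<^sub>R ip L h (K j))) (cbox 0 L)"
    using assms by (intro has_integral_add has_integral_cmul has_integral_sum ip_has_integral) auto
  then show ?thesis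
    unfolding ip_def rk_update_def
    by (simp add: distrib_left scaleR_sum_right sum_distrib_left cnj_sum integral_unique)
qed

section \<open>The energy form\<close>

text \<open>The sesquilinear form whose diagonal is the energy with the auxiliary variable \<open>q\<close> in place
  of \<open>|E|\<^sup>2\<close>.\<close>

definition energy_form :: "real^'d::finite \<Rightarrow> real \<Rightarrow> (real^'d \<Rightarrow> complex) \<Rightarrow> (real^'d \<Rightarrow> complex)
    \<Rightarrow> (real^'d \<Rightarrow> complex) \<Rightarrow> (real^'d \<Rightarrow> complex) \<Rightarrow> (real^'d \<Rightarrow> complex) \<Rightarrow> (real^'d \<Rightarrow> complex)
    \<Rightarrow> (real^'d \<Rightarrow> complex) \<Rightarrow> (real^'d \<Rightarrow> complex) \<Rightarrow> complex" where
  "energy_form L \<epsilon> E N V Q E' N' V' Q' =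
     ip L (lap E) E' - of_real (\<epsilon>^2) * ip L (lap E) (lap E')
     - 1/2 * ip L N N' + of_real (\<epsilon>^2) / 2 * ip L (lap N) N' - 1/2 * ip L N Q' - 1/2 * ip L Q N'
     + 1/2 * ip L (lap V) V'"

lemma energy_form_rk_update_left:
  assumes "smooth_fun E" "smooth_fun N" "smooth_fun V" "smooth_fun Q"
    and "smooth_fun E'" "smooth_fun N'" "smooth_fun V'" "smooth_fun Q'"
    and "\<And>j. j \<in> A \<Longrightarrow> smooth_fun (K1 j)" "\<And>j. j \<in> A \<Longrightarrow> smooth_fun (K2 j)"
    and "\<And>j. j \<in> A \<Longrightarrow> smooth_fun (K3 j)" "\<And>j. j \<in> A \<Longrightarrow> smooth_fun (K4 j)"
    and "finite A"
  shows "energy_form L \<epsilon> (rk_update E t c K1 A) (rk_update N t c K2 A) (rk_update V t c K3 A) (rk_update Q t c K4 A)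
      E' N' V' Q'
    = energy_form L \<epsilon> E N V Q E' N' V' Q' + t *\<^sub>R (\<Sum>j\<in>A. c j *\<^sub>R energy_form L \<epsilon> (K1 j) (K2 j) (K3 j) (K4 j) E' N' V' Q')"
  using assms
  by (simp add: energy_form_def lap_rk_update ip_rk_update_left smooth_imp_continuous smooth_lap
      scaleR_conv_of_real algebra_simps sum_distrib_left sum.distrib sum_subtractf)

lemma energy_form_rk_update_right:
  assumes "smooth_fun E" "smooth_fun N" "smooth_fun V" "smooth_fun Q"
    and "smooth_fun E'" "smooth_fun N'" "smooth_fun V'" "smooth_fun Q'"
    and "\<And>j. j \<in> A \<Longrightarrow> smooth_fun (K1 j)" "\<And>j. j \<in> A \<Longrightarrow> smooth_fun (K2 j)"
    and "\<And>j. j \<in> A \<Longrightarrow> smooth_fun (K3 j)" "\<And>j. j \<in> A \<Longrightarrow> smooth_fun (K4 j)"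
    and "finite A"
  shows "energy_form L \<epsilon> E' N' V' Q'
      (rk_update E t c K1 A) (rk_update N t c K2 A) (rk_update V t c K3 A) (rk_update Q t c K4 A)
    = energy_form L \<epsilon> E' N' V' Q' E N V Q + t *\<^sub>R (\<Sum>j\<in>A. c j *\<^sub>R energy_form L \<epsilon> E' N' V' Q' (K1 j) (K2 j) (K3 j) (K4 j))"
  using assms
  by (simp add: energy_form_def lap_rk_update ip_rk_update_right smooth_imp_continuous smooth_lap
      scaleR_conv_of_real algebra_simps sum_distrib_left sum.distrib sum_subtractf)

definition rhs_E :: "real \<Rightarrow> (real^'d::finite \<Rightarrow> complex) \<Rightarrow> (real^'d \<Rightarrow> real) \<Rightarrow> real^'d \<Rightarrow> complex" where
  "rhs_E \<epsilon> E N = (\<lambda>x. \<i> * (lap E x - of_real (\<epsilon>^2) * lap (lap E) x - of_real (N x) * E x))"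

definition rhs_v :: "real \<Rightarrow> (real^'d::finite \<Rightarrow> real) \<Rightarrow> (real^'d \<Rightarrow> real) \<Rightarrow> real^'d \<Rightarrow> real" where
  "rhs_v \<epsilon> N Q = (\<lambda>x. N x - \<epsilon>^2 * lap N x + Q x)"

definition rhs_q :: "(real^'d::finite \<Rightarrow> complex) \<Rightarrow> (real^'d \<Rightarrow> complex) \<Rightarrow> real^'d \<Rightarrow> real" where
  "rhs_q E K = (\<lambda>x. 2 * Re (cnj (E x) * K x))"

lemma smooth_rhs:
  assumes "smooth_fun E" "smooth_fun N" "smooth_fun Q"
  shows "smooth_fun (rhs_E \<epsilon> E N)" "smooth_fun (rhs_v \<epsilon> N Q)" "smooth_fun (rhs_q E (rhs_E \<epsilon> E N))"
proof -
  note smooth_scale = smooth_bounded_linear[OF bounded_linear_mult_right]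
    smooth_bounded_linear[OF bounded_linear_of_real]
  show E: "smooth_fun (rhs_E \<epsilon> E N)"
    unfolding rhs_E_def by (intro smooth_scale smooth_diff smooth_lap smooth_mult assms)
  show "smooth_fun (rhs_v \<epsilon> N Q)"
    unfolding rhs_v_def by (intro smooth_scale smooth_add smooth_diff smooth_lap assms)
  show "smooth_fun (rhs_q E (rhs_E \<epsilon> E N))"
    unfolding rhs_q_def
    by (intro smooth_scale smooth_bounded_linear[OF bounded_linear_Re] smooth_mult
        smooth_bounded_linear[OF bounded_linear_cnj] E assms)
qed

lemma periodic_rhs:
  assumes "periodic_fun L E" "periodic_fun L N" "periodic_fun L Q"
  shows "periodic_fun L (rhs_E \<epsilon> E N)" "periodic_fun L (rhs_v \<epsilon> N Q)" "periodic_fun L (rhs_q E (rhs_E \<epsilon> E N))"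
  using assms periodic_lap[OF assms(1)] periodic_lap[OF periodic_lap[OF assms(1)]] periodic_lap[OF assms(2)]
  by (simp_all add: periodic_fun_def rhs_E_def rhs_v_def rhs_q_def)

lemma energy_form_add_swap:
  fixes E K1 :: "real^'d::finite \<Rightarrow> complex" and N V Q K3 K4 :: "real^'d \<Rightarrow> real"
  assumes L: "\<forall>j. 0 < L$j"
    and smooth: "smooth_fun E" "smooth_fun N" "smooth_fun V" "smooth_fun Q"
      "smooth_fun K1" "smooth_fun K3" "smooth_fun K4"
    and periodic: "periodic_fun L E" "periodic_fun L N" "periodic_fun L V" "periodic_fun L K1" "periodic_fun L K3"
  shows "energy_form L \<epsilon> E (cx N) (cx V) (cx Q) K1 (cx (lap V)) (cx K3) (cx K4)
       + energy_form L \<epsilon> K1 (cx (lap V)) (cx K3) (cx K4) E (cx N) (cx V) (cx Q)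
     = integral (cbox 0 L) (\<lambda>x. of_real (2 * Re ((lap E x - of_real (\<epsilon>^2) * lap (lap E) x) * cnj (K1 x))
         + (\<epsilon>^2 * lap N x - N x - Q x + K3 x) * lap V x - N x * K4 x))"
proof -
  define K2 where "K2 = lap V"
  have K2: "smooth_fun K2" "periodic_fun L K2"
    unfolding K2_def using smooth_lap periodic_lap smooth periodic by auto
  have lap_cx': "lap (cx N) = cx (lap N)" "lap (cx V) = cx K2" "lap (cx K2) = cx (lap K2)" "lap (cx K3) = cx (lap K3)"
    using lap_cx smooth K2 by (simp_all add: K2_def)
  note self_adjoint = ip_lap_self_adjoint[OF L]
  have ibp: "ip L (lap K1) E = cnj (ip L (lap E) K1)"
    "ip L (lap K1) (lap E) = cnj (ip L (lap (lap E)) K1)"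
    "ip L (lap E) (lap K1) = ip L (lap (lap E)) K1"
    "ip L (cx (lap K2)) (cx N) = ip L (cx K2) (cx (lap N))"
    "ip L (cx (lap K3)) (cx V) = ip L (cx K3) (cx K2)"
    using self_adjoint[OF smooth(5) periodic(4) smooth(1) periodic(1)]
      self_adjoint[OF smooth(5) periodic(4) smooth_lap[OF smooth(1)] periodic_lap[OF periodic(1)]]
      self_adjoint[OF smooth_lap[OF smooth(1)] periodic_lap[OF periodic(1)] smooth(5) periodic(4)]
      self_adjoint[OF smooth_cx[OF K2(1)] periodic_cx[OF K2(2)] smooth_cx[OF smooth(2)] periodic_cx[OF periodic(2)]]
      self_adjoint[OF smooth_cx[OF smooth(6)] periodic_cx[OF periodic(5)] smooth_cx[OF smooth(3)] periodic_cx[OF periodic(3)]]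
      ip_commute[of L K1 "lap E"] ip_commute[of L K1 "lap (lap E)"]
    by (simp_all only: lap_cx')
  let ?I = "\<lambda>x. lap E x * cnj (K1 x) - of_real (\<epsilon>^2) * (lap (lap E) x * cnj (K1 x))
     - 1/2 * (cx N x * cnj (cx K2 x)) + of_real (\<epsilon>^2) / 2 * (cx (lap N) x * cnj (cx K2 x))
     - 1/2 * (cx N x * cnj (cx K4 x)) - 1/2 * (cx Q x * cnj (cx K2 x)) + 1/2 * (cx K2 x * cnj (cx K3 x))
     + (cnj (lap E x * cnj (K1 x)) - of_real (\<epsilon>^2) * cnj (lap (lap E) x * cnj (K1 x))
     - 1/2 * (cx K2 x * cnj (cx N x)) + of_real (\<epsilon>^2) / 2 * (cx K2 x * cnj (cx (lap N) x))
     - 1/2 * (cx K2 x * cnj (cx Q x)) - 1/2 * (cx K4 x * cnj (cx N x)) + 1/2 * (cx K3 x * cnj (cx K2 x)))"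
  have "(?I has_integral energy_form L \<epsilon> E (cx N) (cx V) (cx Q) K1 (cx K2) (cx K3) (cx K4)
       + energy_form L \<epsilon> K1 (cx K2) (cx K3) (cx K4) E (cx N) (cx V) (cx Q)) (cbox 0 L)"
    unfolding energy_form_def lap_cx' ibp using smooth K2
    by (intro has_integral_add has_integral_diff has_integral_mult_right ip_has_integral ip_cnj_has_integral)
       (auto intro!: smooth_imp_continuous smooth_cx smooth_lap)
  moreover have "?I x = of_real (2 * Re ((lap E x - of_real (\<epsilon>^2) * lap (lap E) x) * cnj (K1 x))
         + (\<epsilon>^2 * lap N x - N x - Q x + K3 x) * lap V x - N x * K4 x)" for x
    by (simp add: K2_def cx_def complex_eq_iff algebra_simps)
  ultimately show ?thesis
    by (simp add: K2_def integral_unique)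
qed

lemma energy_form_rhs_skew:
  fixes \<epsilon> :: real and E :: "real^'d::finite \<Rightarrow> complex" and N V Q :: "real^'d \<Rightarrow> real"
  assumes L: "\<forall>j. 0 < L$j"
    and smooth: "smooth_fun E" "smooth_fun N" "smooth_fun V" "smooth_fun Q"
    and periodic: "periodic_fun L E" "periodic_fun L N" "periodic_fun L V" "periodic_fun L Q"
  defines "K1 \<equiv> rhs_E \<epsilon> E N"
  shows "energy_form L \<epsilon> E (cx N) (cx V) (cx Q) K1 (cx (lap V)) (cx (rhs_v \<epsilon> N Q)) (cx (rhs_q E K1))
       + energy_form L \<epsilon> K1 (cx (lap V)) (cx (rhs_v \<epsilon> N Q)) (cx (rhs_q E K1)) E (cx N) (cx V) (cx Q) = 0"
proof -
  have "(\<lambda>x. of_real (2 * Re ((lap E x - of_real (\<epsilon>^2) * lap (lap E) x) * cnj (K1 x))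
      + (\<epsilon>^2 * lap N x - N x - Q x + rhs_v \<epsilon> N Q x) * lap V x - N x * rhs_q E K1 x)) = (\<lambda>x. 0 :: complex)"
    by (simp add: K1_def rhs_E_def rhs_v_def rhs_q_def algebra_simps)
  then show ?thesis
    using energy_form_add_swap[OF L smooth smooth_rhs(1,2,3)[OF smooth(1,2,4), of \<epsilon>]
        periodic(1-3) periodic_rhs(1,2)[OF periodic(1,2,4), of \<epsilon>], of \<epsilon>]
    unfolding K1_def by simp
qed

definition modified_energy :: "real^'d::finite \<Rightarrow> real \<Rightarrow> (real^'d \<Rightarrow> complex) \<Rightarrow> (real^'d \<Rightarrow> real)
    \<Rightarrow> (real^'d \<Rightarrow> real) \<Rightarrow> (real^'d \<Rightarrow> real) \<Rightarrow> complex" where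
  "modified_energy L \<epsilon> E N v q = energy_form L \<epsilon> E (cx N) (cx v) (cx q) E (cx N) (cx v) (cx q)"

lemma energy_eq_modified_energy:
  assumes "smooth_fun N" "smooth_fun v" and "\<And>x. q x = (cmod (E x))^2"
  shows "energy L \<epsilon> E N v = modified_energy L \<epsilon> E N v q"
proof -
  have q: "q = (\<lambda>x. (cmod (E x))^2)"
    using assms(3) by auto
  show ?thesis
    unfolding energy_def modified_energy_def energy_form_def lap_cx[OF assms(1)] lap_cx[OF assms(2)] q
      ip_cx_commute[of L "\<lambda>x. (cmod (E x))^2" N]
    by (simp add: algebra_simps)
qed

lemma rk_step_preserves_density:
  fixes E E' :: "real^'d::finite \<Rightarrow> complex" and q q' :: "real^'d \<Rightarrow> real"
    and Es k1 :: "nat \<Rightarrow> real^'d \<Rightarrow> complex" and k4 :: "nat \<Rightarrow> real^'d \<Rightarrow> real"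
  assumes symplectic: "\<forall>i\<in>{1..s}. \<forall>j\<in>{1..s}. b i * a i j + b j * a j i = b i * b j"
    and stage_E: "\<And>i. i \<in> {1..s} \<Longrightarrow> Es i = (\<lambda>x. E x + of_real \<tau> * (\<Sum>j=1..s. of_real (a i j) * k1 j x))"
    and k4: "\<And>i. i \<in> {1..s} \<Longrightarrow> k4 i = rhs_q (Es i) (k1 i)"
    and update_E: "E' = (\<lambda>x. E x + of_real \<tau> * (\<Sum>i=1..s. of_real (b i) * k1 i x))"
    and update_q: "q' = (\<lambda>x. q x + \<tau> * (\<Sum>i=1..s. b i * k4 i x))"
    and density: "q x = (cmod (E x))^2"
  shows "q' x = (cmod (E' x))^2"
proof -
  define comb where "comb c = E x + \<tau> *\<^sub>R (\<Sum>j=1..s. c j *\<^sub>R k1 j x)" for c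
  have update: "E' x = comb b"
    by (simp add: update_E comb_def scaleR_conv_of_real)
  have stage: "Es i x = comb (a i)" if "i \<in> {1..s}" for i
    using stage_E[OF that] by (simp add: comb_def scaleR_conv_of_real)
  have "complex_of_real ((cmod (E' x))^2) = comb b * cnj (comb b)"
    unfolding update complex_norm_square ..
  also have "\<dots> = E x * cnj (E x) + \<tau> *\<^sub>R (\<Sum>i=1..s. b i *\<^sub>R of_real (k4 i x))"
  proof (rule symplectic_rk_quadratic[OF symplectic, where S = "\<lambda>z w. z * cnj w" and comb = comb
        and Y = "E x" and K = "\<lambda>j. k1 j x" and V = UNIV])
    show "comb (a i) * cnj (k1 i x) + k1 i x * cnj (comb (a i)) = of_real (k4 i x)" if "i \<in> {1..s}" for i
      using k4[OF that] stage[OF that, symmetric] by (simp add: rhs_q_def complex_eq_iff algebra_simps)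
  qed (auto simp: comb_def algebra_simps scaleR_sum_right sum_distrib_left sum_distrib_right cnj_sum)
  also have "\<dots> = of_real (q' x)"
    unfolding complex_norm_square[symmetric] density[symmetric]
    by (simp add: update_q scaleR_conv_of_real sum_distrib_left)
  finally show ?thesis
    by (simp only: of_real_eq_iff)
qed

lemma modified_energy_rk_step:
  fixes L :: "real^'d::finite" and E E' :: "real^'d \<Rightarrow> complex" and N v q N' v' q' :: "real^'d \<Rightarrow> real"
    and Es k1 :: "nat \<Rightarrow> real^'d \<Rightarrow> complex" and Ns vs Qs k2 k3 k4 :: "nat \<Rightarrow> real^'d \<Rightarrow> real"
  assumes L: "\<forall>j. 0 < L$j"
    and symplectic: "\<forall>i\<in>{1..s}. \<forall>j\<in>{1..s}. b i * a i j + b j * a j i = b i * b j"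
    and stage_E: "\<And>i. i \<in> {1..s} \<Longrightarrow> Es i = (\<lambda>x. E x + of_real \<tau> * (\<Sum>j=1..s. of_real (a i j) * k1 j x))"
    and stage_N: "\<And>i. i \<in> {1..s} \<Longrightarrow> Ns i = (\<lambda>x. N x + \<tau> * (\<Sum>j=1..s. a i j * k2 j x))"
    and stage_v: "\<And>i. i \<in> {1..s} \<Longrightarrow> vs i = (\<lambda>x. v x + \<tau> * (\<Sum>j=1..s. a i j * k3 j x))"
    and stage_Q: "\<And>i. i \<in> {1..s} \<Longrightarrow> Qs i = (\<lambda>x. q x + \<tau> * (\<Sum>j=1..s. a i j * k4 j x))"
    and k1: "\<And>i. i \<in> {1..s} \<Longrightarrow> k1 i = rhs_E \<epsilon> (Es i) (Ns i)"
    and k2: "\<And>i. i \<in> {1..s} \<Longrightarrow> k2 i = lap (vs i)"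
    and k3: "\<And>i. i \<in> {1..s} \<Longrightarrow> k3 i = rhs_v \<epsilon> (Ns i) (Qs i)"
    and k4: "\<And>i. i \<in> {1..s} \<Longrightarrow> k4 i = rhs_q (Es i) (k1 i)"
    and update_E: "E' = (\<lambda>x. E x + of_real \<tau> * (\<Sum>i=1..s. of_real (b i) * k1 i x))"
    and update_N: "N' = (\<lambda>x. N x + \<tau> * (\<Sum>i=1..s. b i * k2 i x))"
    and update_v: "v' = (\<lambda>x. v x + \<tau> * (\<Sum>i=1..s. b i * k3 i x))"
    and update_q: "q' = (\<lambda>x. q x + \<tau> * (\<Sum>i=1..s. b i * k4 i x))"
    and smooth: "smooth_fun E" "smooth_fun N" "smooth_fun v" "smooth_fun q"
    and stage_regular: "\<And>i. i \<in> {1..s} \<Longrightarrow> smooth_fun (Es i) \<and> periodic_fun L (Es i)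
      \<and> smooth_fun (Ns i) \<and> periodic_fun L (Ns i) \<and> smooth_fun (vs i) \<and> periodic_fun L (vs i)
      \<and> smooth_fun (Qs i) \<and> periodic_fun L (Qs i)"
  shows "modified_energy L \<epsilon> E' N' v' q' = modified_energy L \<epsilon> E N v q"
proof -
  define S where "S = (\<lambda>(E, N, V, Q) (E', N', V', Q'). energy_form L \<epsilon> E N V Q E' N' V' Q')"
  define K where "K j = (k1 j, cx (k2 j), cx (k3 j), cx (k4 j))" for j
  define comb where "comb c = (rk_update E \<tau> c k1 {1..s}, rk_update (cx N) \<tau> c (\<lambda>j. cx (k2 j)) {1..s},
    rk_update (cx v) \<tau> c (\<lambda>j. cx (k3 j)) {1..s}, rk_update (cx q) \<tau> c (\<lambda>j. cx (k4 j)) {1..s})" for c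
  define V :: "((real^'d \<Rightarrow> complex) \<times> (real^'d \<Rightarrow> complex) \<times> (real^'d \<Rightarrow> complex) \<times> (real^'d \<Rightarrow> complex)) set"
    where "V = {(F1, F2, F3, F4). smooth_fun F1 \<and> smooth_fun F2 \<and> smooth_fun F3 \<and> smooth_fun F4}"
  have K: "smooth_fun (k1 j)" "smooth_fun (cx (k2 j))" "smooth_fun (cx (k3 j))" "smooth_fun (cx (k4 j))"
    if "j \<in> {1..s}" for j
    using smooth_rhs[of "Es j" "Ns j" "Qs j" \<epsilon>] smooth_lap[of "vs j"] stage_regular[OF that]
    by (simp_all add: k1[OF that] k2[OF that] k3[OF that] k4[OF that] smooth_cx)
  have Y: "smooth_fun E" "smooth_fun (cx N)" "smooth_fun (cx v)" "smooth_fun (cx q)"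
    using smooth by (simp_all add: smooth_cx)
  have stage: "comb (a i) = (Es i, cx (Ns i), cx (vs i), cx (Qs i))" if "i \<in> {1..s}" for i
    unfolding comb_def stage_E[OF that] stage_N[OF that] stage_v[OF that] stage_Q[OF that]
    by (simp add: rk_update_of_real cx_rk_update)
  have update: "comb b = (E', cx N', cx v', cx q')"
    unfolding comb_def update_E update_N update_v update_q by (simp add: rk_update_of_real cx_rk_update)
  have "S (comb b) (comb b) = S (E, cx N, cx v, cx q) (E, cx N, cx v, cx q) + \<tau> *\<^sub>R (\<Sum>i=1..s. b i *\<^sub>R 0)"
  proof (rule symplectic_rk_quadratic[OF symplectic, where S = S and comb = comb and K = K and V = V])
    fix c Z assume "Z \<in> V"
    then obtain F1 F2 F3 F4 where Z: "Z = (F1, F2, F3, F4)"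
      and F: "smooth_fun F1" "smooth_fun F2" "smooth_fun F3" "smooth_fun F4"
      unfolding V_def by auto
    show "S (comb c) Z = S (E, cx N, cx v, cx q) Z + \<tau> *\<^sub>R (\<Sum>j=1..s. c j *\<^sub>R S (K j) Z)"
      unfolding Z S_def K_def comb_def using energy_form_rk_update_left[OF Y F K finite_atLeastAtMost] by simp
    show "S Z (comb c) = S Z (E, cx N, cx v, cx q) + \<tau> *\<^sub>R (\<Sum>j=1..s. c j *\<^sub>R S Z (K j))"
      unfolding Z S_def K_def comb_def using energy_form_rk_update_right[OF Y F K finite_atLeastAtMost] by simp
  next
    show "comb b \<in> V"
      using K Y unfolding comb_def V_def by (auto intro!: smooth_rk_update)
  next
    fix i assume i: "i \<in> {1..s}"
    then show "S (comb (a i)) (K i) + S (K i) (comb (a i)) = 0"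
      unfolding stage[OF i] S_def K_def k1[OF i] k2[OF i] k3[OF i] k4[OF i]
      using energy_form_rhs_skew[OF L] stage_regular[OF i] by simp
  next
    show "(E, cx N, cx v, cx q) \<in> V"
      using Y by (simp add: V_def)
  next
    show "K j \<in> V" if "j \<in> {1..s}" for j
      using K[OF that] by (simp add: V_def K_def)
  qed
  then show ?thesis
    unfolding update modified_energy_def S_def by simp
qed

theorem theorem3p2:
  fixes L :: "real^'d::finite" and \<epsilon> \<tau> :: real and s J :: nat
    and a :: "nat \<Rightarrow> nat \<Rightarrow> real" and b :: "nat \<Rightarrow> real"
    and E :: "nat \<Rightarrow> real^'d \<Rightarrow> complex" and N v q :: "nat \<Rightarrow> real^'d \<Rightarrow> real"
    and Es k1 :: "nat \<Rightarrow> nat \<Rightarrow> real^'d \<Rightarrow> complex"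
    and Ns vs Qs k2 k3 k4 :: "nat \<Rightarrow> nat \<Rightarrow> real^'d \<Rightarrow> real"
    and E0 :: "real^'d \<Rightarrow> complex" and N0 N1 :: "real^'d \<Rightarrow> real"
  assumes dim: "CARD('d) \<le> 2"
    and L_pos: "\<forall>i. L$i > 0"
    and eps: "\<epsilon> > 0" and tau: "\<tau> > 0"
    and symp: "\<forall>i\<in>{1..s}. \<forall>j\<in>{1..s}. b i * a i j + b j * a j i = b i * b j"
    and stE: "\<forall>n<J. \<forall>i\<in>{1..s}. Es n i = (\<lambda>x. E n x + of_real \<tau> * (\<Sum>j=1..s. of_real (a i j) * k1 n j x))"
    and stk1: "\<forall>n<J. \<forall>i\<in>{1..s}. k1 n i = (\<lambda>x. \<i> * (lap (Es n i) x - of_real (\<epsilon>^2) * lap (lap (Es n i)) x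
                                              - of_real (Ns n i x) * Es n i x))"
    and stN: "\<forall>n<J. \<forall>i\<in>{1..s}. Ns n i = (\<lambda>x. N n x + \<tau> * (\<Sum>j=1..s. a i j * k2 n j x))"
    and stk2: "\<forall>n<J. \<forall>i\<in>{1..s}. k2 n i = lap (vs n i)"
    and stv: "\<forall>n<J. \<forall>i\<in>{1..s}. vs n i = (\<lambda>x. v n x + \<tau> * (\<Sum>j=1..s. a i j * k3 n j x))"
    and stk3: "\<forall>n<J. \<forall>i\<in>{1..s}. k3 n i = (\<lambda>x. Ns n i x - \<epsilon>^2 * lap (Ns n i) x + Qs n i x)"
    and stQ: "\<forall>n<J. \<forall>i\<in>{1..s}. Qs n i = (\<lambda>x. q n x + \<tau> * (\<Sum>j=1..s. a i j * k4 n j x))"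
    and stk4: "\<forall>n<J. \<forall>i\<in>{1..s}. k4 n i = (\<lambda>x. 2 * Re (cnj (Es n i x) * k1 n i x))"
    and upE: "\<forall>n<J. E (Suc n) = (\<lambda>x. E n x + of_real \<tau> * (\<Sum>i=1..s. of_real (b i) * k1 n i x))"
    and upN: "\<forall>n<J. N (Suc n) = (\<lambda>x. N n x + \<tau> * (\<Sum>i=1..s. b i * k2 n i x))"
    and upv: "\<forall>n<J. v (Suc n) = (\<lambda>x. v n x + \<tau> * (\<Sum>i=1..s. b i * k3 n i x))"
    and upq: "\<forall>n<J. q (Suc n) = (\<lambda>x. q n x + \<tau> * (\<Sum>i=1..s. b i * k4 n i x))"
    and init_E: "E 0 = E0" and init_N: "N 0 = N0"
    and init_q: "q 0 = (\<lambda>x. (cmod (E0 x))^2)"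
    and init_v: "lap (v 0) = N1" and v0_mean: "integral (cbox 0 L) (v 0) = 0"
    and N1_mean: "integral (cbox 0 L) N1 = 0"
    and reg: "\<forall>n\<le>J. smooth_fun (E n) \<and> periodic_fun L (E n) \<and> smooth_fun (N n) \<and> periodic_fun L (N n)
                 \<and> smooth_fun (v n) \<and> periodic_fun L (v n) \<and> smooth_fun (q n) \<and> periodic_fun L (q n)"
    and reg_stage: "\<forall>n<J. \<forall>i\<in>{1..s}. smooth_fun (Es n i) \<and> periodic_fun L (Es n i)
                 \<and> smooth_fun (Ns n i) \<and> periodic_fun L (Ns n i) \<and> smooth_fun (vs n i) \<and> periodic_fun L (vs n i)
                 \<and> smooth_fun (Qs n i) \<and> periodic_fun L (Qs n i)"
  shows "\<forall>n\<in>{1..J}. energy L \<epsilon> (E n) (N n) (v n) = energy L \<epsilon> (E 0) (N 0) (v 0)"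
proof -
  have stage_rhs: "k1 n i = rhs_E \<epsilon> (Es n i) (Ns n i)" "k3 n i = rhs_v \<epsilon> (Ns n i) (Qs n i)"
    "k4 n i = rhs_q (Es n i) (k1 n i)" if "n < J" "i \<in> {1..s}" for n i
    using stk1 stk3 stk4 that by (simp_all add: rhs_E_def rhs_v_def rhs_q_def)
  have density: "q n x = (cmod (E n x))^2" if "n \<le> J" for n x
    using that
  proof (induction n)
    case (Suc n)
    then have n: "n < J" by simp
    show ?case
      by (rule rk_step_preserves_density[OF symp stE[rule_format, OF n] stage_rhs(3)[OF n]
            upE[rule_format, OF n] upq[rule_format, OF n]]) (use Suc n in simp_all)
  qed (simp add: init_q init_E)
  have conserved: "modified_energy L \<epsilon> (E n) (N n) (v n) (q n) = modified_energy L \<epsilon> (E 0) (N 0) (v 0) (q 0)"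
    if "n \<le> J" for n
    using that
  proof (induction n)
    case (Suc n)
    then have n: "n < J" by simp
    with Suc show ?case
      using modified_energy_rk_step[OF L_pos symp stE[rule_format, OF n] stN[rule_format, OF n]
          stv[rule_format, OF n] stQ[rule_format, OF n] stage_rhs(1)[OF n] stk2[rule_format, OF n]
          stage_rhs(2)[OF n] stage_rhs(3)[OF n] upE[rule_format, OF n] upN[rule_format, OF n]
          upv[rule_format, OF n] upq[rule_format, OF n]] reg reg_stage
      by simp
  qed simp
  have "energy L \<epsilon> (E n) (N n) (v n) = modified_energy L \<epsilon> (E n) (N n) (v n) (q n)" if "n \<le> J" for n
    using reg density that by (intro energy_eq_modified_energy) auto
  then show ?thesis
    using conserved by (metis atLeastAtMost_iff zero_le)
qed

end
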